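(* Let $(M,\omega)$ be a symplectic manifold, $N\ge4$, and $X_1,\dots,X_N\subset M$ compact sets intersecting cyclically. Let $\Delta=[0,1]\times[0,1]$ with points $p_1=(0,1)$, $p_2,\dots,p_{N-2}\in[0,1]\times\{0\}$ and $p_{N-1}=(1,1)$, in counterclockwise cyclic order, and let $\gamma_1,\dots,\gamma_{N-1}$ be the corresponding arcs (so $\gamma_{N-1}=[0,1]\times\{1\}$). Let $\Phi\in\mathcal F'_{\mathbf\Delta,N-1}(X_1,\dots,X_{N-2},X_{N-1}\cup X_N)$ for this datum $\mathbf\Delta$. Then for every $\varepsilon>0$ there exists a smooth $\widetilde\Phi=(\widetilde\Phi_1,\widetilde\Phi_2):M\to\Delta$ such that: (i) $\widetilde\Phi(X_k)\subseteq\gamma_k$ for all $1\le k\le N-2$; (ii) there is $\delta>0$ with $\widetilde\Phi(X_{N-1})\subseteq\gamma_{N-1}\setminus B_\delta(p_1)$ and $\widetilde\Phi(X_N)\subseteq\gamma_{N-1}\setminus B_\delta(p_{N-1})$; (iii) $\|\{\widetilde\Phi_1,\widetilde\Phi_2\}\|\le\|\{\Phi_1,\Phi_2\}\|+\varepsilon$.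
   Context: $\{\cdot,\cdot\}$ is the Poisson bracket of $(M,\omega)$ and $\|\cdot\|$ the supremum norm over $M$; $B_\delta(p)$ is the open Euclidean disc of radius $\delta$ centered at $p$. For a datum consisting of a compact convex $\Delta\subset\mathbb R^2$ and points $p_1,\dots,p_n\in\partial\Delta$ in counterclockwise cyclic order, $\gamma_i$ is the closed arc of $\partial\Delta$ from $p_i$ counterclockwise to $p_{i+1}$ (indices mod $n$). A smooth $\Phi=(\Phi_1,\Phi_2):M\to\Delta$ satisfies (CS) if there is $(a,b)\in\Delta$ with $\Phi_1-a,\Phi_2-b$ compactly supported. $\mathcal F'_{\mathbf\Delta,n}(Y_1,\dots,Y_n)$ is the set of smooth $\Phi:M\to\Delta$ satisfying (CS) such that for every $i$ there is an open $U_i\supset Y_i$ with $\Phi(U_i)\subseteq\gamma_i$. Sets $X_1,\dots,X_N$ intersect cyclically if $X_i\cap X_j=\emptyset$ whenever $i\notin\{j-1,j,j+1\}$ mod $N$. *)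

theory Defs
  imports "HOL-Analysis.Analysis" "HOL-Library.Extended_Nonnegative_Real"
begin

definition pderiv_coord :: "'d::finite \<Rightarrow> (real^'d \<Rightarrow> real) \<Rightarrow> real^'d \<Rightarrow> real" where
  "pderiv_coord i f x = frechet_derivative f (at x) (axis i 1)"

fun Ck_on :: "nat \<Rightarrow> (real^'d::finite) set \<Rightarrow> (real^'d \<Rightarrow> real) \<Rightarrow> bool" where
  "Ck_on 0 S f = continuous_on S f"
| "Ck_on (Suc k) S f = ((\<forall>x\<in>S. f differentiable (at x)) \<and>
       (\<forall>i. Ck_on k S (pderiv_coord i f)))"

definition smooth_fun_on :: "(real^'d::finite) set \<Rightarrow> (real^'d \<Rightarrow> real) \<Rightarrow> bool" where
  "smooth_fun_on S f = (\<forall>k. Ck_on k S f)"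

definition smooth_map_on :: "(real^'d::finite) set \<Rightarrow> (real^'d \<Rightarrow> real^'e::finite) \<Rightarrow> bool" where
  "smooth_map_on S F = (\<forall>j. smooth_fun_on S (\<lambda>x. F x $ j))"

definition grad_coord :: "(real^'d::finite \<Rightarrow> real) \<Rightarrow> real^'d \<Rightarrow> real^'d" where
  "grad_coord f x = (\<chi> i. pderiv_coord i f x)"

type_synonym ('m, 'd) chart = "'m set \<times> ('m \<Rightarrow> real^'d)"

definition is_chart :: "'m topology \<Rightarrow> ('m, 'd::finite) chart \<Rightarrow> bool" where
  "is_chart X c = (case c of (U, \<phi>) \<Rightarrow> openin X U \<and> open (\<phi> ` U) \<and>
      homeomorphic_map (subtopology X U) (subtopology euclidean (\<phi> ` U)) \<phi>)"

definition transition :: "('m, 'd::finite) chart \<Rightarrow> ('m, 'd) chart \<Rightarrow> real^'d \<Rightarrow> real^'d" where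
  "transition c c' = snd c' \<circ> inv_into (fst c) (snd c)"

definition smooth_atlas :: "'m topology \<Rightarrow> ('m, 'd::finite) chart set \<Rightarrow> bool" where
  "smooth_atlas X A = ((\<forall>c\<in>A. is_chart X c) \<and> \<Union>(fst ` A) = topspace X \<and>
      (\<forall>c\<in>A. \<forall>c'\<in>A. smooth_map_on (snd c ` (fst c \<inter> fst c')) (transition c c')))"

definition smooth_manifold :: "'m topology \<Rightarrow> ('m, 'd::finite) chart set \<Rightarrow> bool" where
  "smooth_manifold X A = (Hausdorff_space X \<and> second_countable X \<and> smooth_atlas X A)"

definition smooth_on_mfd :: "('m, 'd::finite) chart set \<Rightarrow> ('m \<Rightarrow> real) \<Rightarrow> bool" where
  "smooth_on_mfd A f = (\<forall>c\<in>A. smooth_fun_on (snd c ` fst c) (f \<circ> inv_into (fst c) (snd c)))"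

text \<open>A 2-form is given by its coefficient matrices W c x in every chart c
  (omega(v,w) = v^T W w in coordinates), transforming correctly on overlaps.\<close>

definition symplectic_manifold ::
  "'m topology \<Rightarrow> ('m, 'd::finite) chart set \<Rightarrow> (('m, 'd) chart \<Rightarrow> real^'d \<Rightarrow> real^'d^'d) \<Rightarrow> bool" where
  "symplectic_manifold X A W = (smooth_manifold X A \<and>
     (\<forall>c\<in>A. \<forall>i j. smooth_fun_on (snd c ` fst c) (\<lambda>x. W c x $ i $ j)) \<and>
     (\<forall>c\<in>A. \<forall>x\<in>snd c ` fst c. transpose (W c x) = - W c x) \<and>
     (\<forall>c\<in>A. \<forall>x\<in>snd c ` fst c. invertible (W c x)) \<and>
     (\<forall>c\<in>A. \<forall>x\<in>snd c ` fst c. \<forall>i j k.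
         pderiv_coord i (\<lambda>y. W c y $ j $ k) x + pderiv_coord j (\<lambda>y. W c y $ k $ i) x
       + pderiv_coord k (\<lambda>y. W c y $ i $ j) x = 0) \<and>
     (\<forall>c\<in>A. \<forall>c'\<in>A. \<forall>x\<in>snd c ` (fst c \<inter> fst c').
         W c x = transpose (matrix (frechet_derivative (transition c c') (at x)))
                 ** W c' (transition c c' x)
                 ** matrix (frechet_derivative (transition c c') (at x))))"

text \<open>Poisson bracket, computed in (any) chart containing the point:
  {F,G} = dF (W^-1 grad G). (The overall sign convention is irrelevant below, only
  its absolute value enters.)\<close>
definition poisson_bracket ::
  "('m, 'd::finite) chart set \<Rightarrow> (('m, 'd) chart \<Rightarrow> real^'d \<Rightarrow> real^'d^'d) \<Rightarrow>
   ('m \<Rightarrow> real) \<Rightarrow> ('m \<Rightarrow> real) \<Rightarrow> 'm \<Rightarrow> real" where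
  "poisson_bracket A W F G p =
     (let c = (SOME c. c \<in> A \<and> p \<in> fst c); y = snd c p;
          \<psi> = inv_into (fst c) (snd c)
      in grad_coord (F \<circ> \<psi>) y \<bullet> (matrix_inv (W c y) *v grad_coord (G \<circ> \<psi>) y))"

definition sup_norm :: "'m topology \<Rightarrow> ('m \<Rightarrow> real) \<Rightarrow> ennreal" where
  "sup_norm X f = (SUP x\<in>topspace X. ennreal \<bar>f x\<bar>)"

definition unit_square :: "(real \<times> real) set" where
  "unit_square = {(x, y). 0 \<le> x \<and> x \<le> 1 \<and> 0 \<le> y \<and> y \<le> 1}"

text \<open>Arcs gamma_1..gamma_(N-1) of the boundary of the square for the points
  p_1 = (0,1), p_k = (s k, 0) for 2 <= k <= N-2, p_(N-1) = (1,1).\<close>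
definition sq_arc :: "nat \<Rightarrow> (nat \<Rightarrow> real) \<Rightarrow> nat \<Rightarrow> (real \<times> real) set" where
  "sq_arc N s k =
    (if k = 1 then {(0, y) | y. 0 \<le> y \<and> y \<le> 1} \<union> {(x, 0) | x. 0 \<le> x \<and> x \<le> s 2}
     else if 2 \<le> k \<and> k \<le> N - 3 then {(x, 0) | x. s k \<le> x \<and> x \<le> s (k + 1)}
     else if k = N - 2 then {(x, 0) | x. s (N - 2) \<le> x \<and> x \<le> 1} \<union> {(1, y) | y. 0 \<le> y \<and> y \<le> 1}
     else {(x, 1) | x. 0 \<le> x \<and> x \<le> 1})"

definition intersect_cyclically :: "nat \<Rightarrow> (nat \<Rightarrow> 'a set) \<Rightarrow> bool" where
  "intersect_cyclically N Xs = (\<forall>i\<in>{1..N}. \<forall>j\<in>{1..N}.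
      \<not> (i mod N = (j + N - 1) mod N \<or> i mod N = j mod N \<or> i mod N = (j + 1) mod N)
      \<longrightarrow> Xs i \<inter> Xs j = {})"

definition CS_cond :: "'m topology \<Rightarrow> (real \<times> real) set \<Rightarrow> ('m \<Rightarrow> real \<times> real) \<Rightarrow> bool" where
  "CS_cond X D \<Phi> = (\<exists>(a, b)\<in>D.
      compactin X (X closure_of {x \<in> topspace X. fst (\<Phi> x) - a \<noteq> 0}) \<and>
      compactin X (X closure_of {x \<in> topspace X. snd (\<Phi> x) - b \<noteq> 0}))"

definition F'_class ::
  "'m topology \<Rightarrow> ('m, 'd::finite) chart set \<Rightarrow> (real \<times> real) set \<Rightarrow> (nat \<Rightarrow> (real \<times> real) set)
   \<Rightarrow> nat \<Rightarrow> (nat \<Rightarrow> 'm set) \<Rightarrow> ('m \<Rightarrow> real \<times> real) set" where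
  "F'_class X A D gam n Y = {\<Phi>.
      smooth_on_mfd A (\<lambda>x. fst (\<Phi> x)) \<and> smooth_on_mfd A (\<lambda>x. snd (\<Phi> x)) \<and>
      \<Phi> ` topspace X \<subseteq> D \<and> CS_cond X D \<Phi> \<and>
      (\<forall>i\<in>{1..n}. \<exists>U. openin X U \<and> Y i \<subseteq> U \<and> \<Phi> ` U \<subseteq> gam i)}"

end

theory Submission
  imports Defs "HOL-Computational_Algebra.Polynomial"
begin

text \<open>On a neighbourhood U of X_(N-1) \<union> X_N the map \<Phi> takes values in the top edge, so
  \<Phi>_2 is constantly 1 there. Choose smooth cutoffs a, b with values in [0,1], supported in U,
  bounded below by a positive constant on X_(N-1) resp. X_N, and vanishing on X_1 resp. X_(N-2).
  Replacing \<Phi>_1 by (1 - (1 - \<Phi>_1)(1 - a/3))(1 - b/3) keeps the image in the square, pushes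
  X_(N-1) away from p_1 = (0,1) and X_N away from p_(N-1) = (1,1), and leaves the corner values
  \<Phi>_1 = 0 on X_1 \<inter> U and \<Phi>_1 = 1 on X_(N-2) \<inter> U untouched. The Poisson bracket does not
  change at all: on U it vanishes before and after because \<Phi>_2 is locally constant, and off the
  supports of a and b nothing was changed. So neither the slack \<epsilon> nor the ordering of the points
  p_2, ..., p_(N-2) is needed.\<close>


section \<open>Smooth functions on open subsets of coordinate space\<close>

lemma frechet_derivative_cong_open:
  assumes "open S" "x \<in> S" "\<forall>y\<in>S. f y = g y"
  shows "frechet_derivative f (at x) = frechet_derivative g (at x)"
proof -
  have "\<And>D. (f has_derivative D) (at x) \<longleftrightarrow> (g has_derivative D) (at x)"
    using assms has_derivative_transform_within_open[of _ _ x UNIV S] by metis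
  thus ?thesis unfolding frechet_derivative_def by simp
qed

lemma differentiable_cong_open:
  assumes "open S" "x \<in> S" "\<forall>y\<in>S. f y = g y"
  shows "f differentiable (at x) \<longleftrightarrow> g differentiable (at x)"
  using assms has_derivative_transform_within_open[of _ _ x UNIV S]
  unfolding differentiable_def by metis

lemma pderiv_coord_cong_open:
  assumes "open S" "x \<in> S" "\<forall>y\<in>S. f y = g y"
  shows "pderiv_coord i f x = pderiv_coord i g x"
  using frechet_derivative_cong_open[OF assms] unfolding pderiv_coord_def by simp

lemma pderiv_coord_const [simp]: "pderiv_coord i (\<lambda>x. c) x = 0"
  by (simp add: pderiv_coord_def)

lemma pderiv_coord_add:
  assumes "f differentiable (at x)" "g differentiable (at x)"
  shows "pderiv_coord i (\<lambda>x. f x + g x) x = pderiv_coord i f x + pderiv_coord i g x"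
proof -
  have "((\<lambda>x. f x + g x) has_derivative
      (\<lambda>h. frechet_derivative f (at x) h + frechet_derivative g (at x) h)) (at x)"
    using assms by (intro has_derivative_add) (auto simp: frechet_derivative_works)
  from frechet_derivative_at[OF this] show ?thesis unfolding pderiv_coord_def by metis
qed

lemma pderiv_coord_mult:
  assumes "f differentiable (at x)" "g differentiable (at x)"
  shows "pderiv_coord i (\<lambda>x. f x * g x) x = f x * pderiv_coord i g x + pderiv_coord i f x * g x"
proof -
  have "((\<lambda>x. f x * g x) has_derivative
      (\<lambda>h. f x * frechet_derivative g (at x) h + frechet_derivative f (at x) h * g x)) (at x)"
    using assms by (intro has_derivative_mult) (auto simp: frechet_derivative_works)
  from frechet_derivative_at[OF this] show ?thesis unfolding pderiv_coord_def by metis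
qed

lemma Ck_on_Suc_imp_Ck_on: "Ck_on (Suc k) S f \<Longrightarrow> Ck_on k S f"
proof (induction k arbitrary: f)
  case 0
  then show ?case
    by (auto intro!: continuous_at_imp_continuous_on differentiable_imp_continuous_within)
qed auto

lemma Ck_on_cong_open:
  assumes "open S" "\<forall>x\<in>S. f x = g x" "Ck_on k S f"
  shows "Ck_on k S g"
  using assms(2,3)
proof (induction k arbitrary: f g)
  case 0
  then show ?case using continuous_on_cong by (metis Ck_on.simps(1))
next
  case (Suc k)
  have "\<forall>x\<in>S. g differentiable (at x)"
    using Suc.prems differentiable_cong_open[OF assms(1), of _ f g] by auto
  moreover have "Ck_on k S (pderiv_coord i g)" for i
  proof (rule Suc.IH)
    show "Ck_on k S (pderiv_coord i f)" using Suc.prems by auto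
    show "\<forall>x\<in>S. pderiv_coord i f x = pderiv_coord i g x"
      using pderiv_coord_cong_open[OF assms(1)] Suc.prems by auto
  qed
  ultimately show ?case by simp
qed

lemma Ck_on_local:
  assumes "\<forall>x\<in>S. \<exists>T. open T \<and> x \<in> T \<and> T \<subseteq> S \<and> Ck_on k T f"
  shows "Ck_on k S f"
  using assms
proof (induction k arbitrary: f)
  case 0
  have "continuous (at x) f" if "x \<in> S" for x
  proof -
    obtain T where "open T" "x \<in> T" "continuous_on T f" using 0 \<open>x \<in> S\<close> by auto
    thus ?thesis using continuous_on_eq_continuous_at by blast
  qed
  then show ?case by (simp add: continuous_at_imp_continuous_on)
next
  case (Suc k)
  have "\<forall>x\<in>S. f differentiable (at x)" using Suc.prems by fastforce
  moreover have "Ck_on k S (pderiv_coord i f)" for i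
    using Suc.prems by (intro Suc.IH) (metis Ck_on.simps(2))
  ultimately show ?case by simp
qed

lemma Ck_on_const: "Ck_on k S (\<lambda>x. c)"
  by (induction k arbitrary: c) (simp_all add: pderiv_coord_def[abs_def])

lemma Ck_on_add:
  assumes "open S" "Ck_on k S f" "Ck_on k S g"
  shows "Ck_on k S (\<lambda>x. f x + g x)"
  using assms(2,3)
proof (induction k arbitrary: f g)
  case 0 then show ?case by (auto intro: continuous_intros)
next
  case (Suc k)
  have "Ck_on k S (pderiv_coord i (\<lambda>x. f x + g x))" for i
  proof (rule Ck_on_cong_open[OF assms(1)])
    show "Ck_on k S (\<lambda>x. pderiv_coord i f x + pderiv_coord i g x)"
      using Suc by auto
    show "\<forall>x\<in>S. pderiv_coord i f x + pderiv_coord i g x = pderiv_coord i (\<lambda>x. f x + g x) x"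
      using Suc.prems pderiv_coord_add by fastforce
  qed
  then show ?case using Suc.prems by auto
qed

lemma Ck_on_mult:
  assumes "open S" "Ck_on k S f" "Ck_on k S g"
  shows "Ck_on k S (\<lambda>x. f x * g x)"
  using assms(2,3)
proof (induction k arbitrary: f g)
  case 0 then show ?case by (auto intro: continuous_intros)
next
  case (Suc k)
  have "Ck_on k S (pderiv_coord i (\<lambda>x. f x * g x))" for i
  proof (rule Ck_on_cong_open[OF assms(1)])
    have "Ck_on k S f" "Ck_on k S g" using Ck_on_Suc_imp_Ck_on Suc.prems by blast+
    then show "Ck_on k S (\<lambda>x. f x * pderiv_coord i g x + pderiv_coord i f x * g x)"
      using Suc by (intro Ck_on_add[OF assms(1)] Suc.IH) auto
    show "\<forall>x\<in>S. f x * pderiv_coord i g x + pderiv_coord i f x * g x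
        = pderiv_coord i (\<lambda>x. f x * g x) x"
      using Suc.prems pderiv_coord_mult by fastforce
  qed
  moreover have "\<forall>x\<in>S. (\<lambda>x. f x * g x) differentiable (at x)"
    using Suc.prems by (auto intro: differentiable_mult)
  ultimately show ?case by simp
qed

lemma Ck_on_diff:
  assumes "open S" "Ck_on k S f" "Ck_on k S g"
  shows "Ck_on k S (\<lambda>x. f x - g x)"
proof -
  have "Ck_on k S (\<lambda>x. f x + (-1) * g x)"
    by (rule Ck_on_add[OF assms(1,2) Ck_on_mult[OF assms(1) Ck_on_const assms(3)]])
  thus ?thesis by simp
qed

lemma Ck_on_sum:
  assumes "open S" "finite I" "\<forall>i\<in>I. Ck_on k S (f i)"
  shows "Ck_on k S (\<lambda>x. \<Sum>i\<in>I. f i x)"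
  using assms(2,3)
proof (induction I rule: finite_induct)
  case empty then show ?case using Ck_on_const by simp
next
  case (insert a F)
  then show ?case using Ck_on_add[OF assms(1), of k "f a" "\<lambda>x. \<Sum>i\<in>F. f i x"] by simp
qed


section \<open>The flat function t \<mapsto> P(1/t) e^(-1/t)\<close>

definition flat_exp :: "real poly \<Rightarrow> real \<Rightarrow> real" where
  "flat_exp P t = (if t > 0 then poly P (inverse t) * exp (- inverse t) else 0)"

text \<open>The derivative of flat_exp P is again of this form, for the polynomial X^2 (P - P').\<close>
definition flat_exp_deriv_poly :: "real poly \<Rightarrow> real poly" where
  "flat_exp_deriv_poly P = [:0, 0, 1:] * (P - pderiv P)"

lemma tendsto_poly_mult_exp_neg_at_top:
  "((\<lambda>u::real. u * poly P u * exp (-u)) \<longlongrightarrow> 0) at_top"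
proof -
  have e: "\<And>u. u * poly P u * exp (-u) = (\<Sum>i\<le>degree P. coeff P i * (u ^ Suc i / exp u))"
    by (simp add: poly_altdef sum_distrib_left sum_distrib_right exp_minus field_simps)
  have "((\<lambda>u. \<Sum>i\<le>degree P. coeff P i * (u ^ Suc i / exp u))
      \<longlongrightarrow> (\<Sum>i\<le>degree P. coeff P i * 0)) at_top"
    by (intro tendsto_sum tendsto_mult tendsto_const tendsto_power_div_exp_0)
  then show ?thesis unfolding e by simp
qed

lemma flat_exp_has_real_derivative_0: "(flat_exp P has_real_derivative 0) (at 0)"
proof -
  have "((\<lambda>y. (flat_exp P y - flat_exp P 0) / (y - 0)) \<longlongrightarrow> 0) (at (0::real))"
  proof (rule filterlim_split_at)
    have ev: "\<forall>\<^sub>F y in at_left 0. 0 = (flat_exp P y - flat_exp P 0) / (y - (0::real))"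
      unfolding eventually_at_left_field by (rule exI[of _ "-1"]) (simp add: flat_exp_def)
    show "((\<lambda>y. (flat_exp P y - flat_exp P 0) / (y - 0)) \<longlongrightarrow> 0) (at_left (0::real))"
      using tendsto_cong[OF ev] tendsto_const[of "0::real" "at_left 0"] by blast
    have ev: "\<forall>\<^sub>F y in at_right 0. inverse y * poly P (inverse y) * exp (- inverse y)
        = (flat_exp P y - flat_exp P 0) / (y - (0::real))"
      unfolding eventually_at_right_field
      by (rule exI[of _ 1]) (simp add: flat_exp_def divide_inverse mult_ac)
    have "((\<lambda>y. inverse y * poly P (inverse y) * exp (- inverse y)) \<longlongrightarrow> 0) (at_right 0)"
      using tendsto_poly_mult_exp_neg_at_top[of P] unfolding filterlim_at_top_to_right .
    then show "((\<lambda>y. (flat_exp P y - flat_exp P 0) / (y - 0)) \<longlongrightarrow> 0) (at_right (0::real))"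
      using tendsto_cong[OF ev] by simp
  qed
  then show ?thesis using has_field_derivative_iff by blast
qed

lemma flat_exp_has_real_derivative:
  "(flat_exp P has_real_derivative flat_exp (flat_exp_deriv_poly P) t) (at t)"
proof (cases t "0::real" rule: linorder_cases)
  case less
  have "((\<lambda>t. 0) has_real_derivative 0) (at t)" by simp
  then have "(flat_exp P has_real_derivative 0) (at t)"
    by (rule has_field_derivative_transform_within_open[where S="{..<0}"])
       (use less in \<open>auto simp: flat_exp_def\<close>)
  then show ?thesis using less by (simp add: flat_exp_def)
next
  case equal
  then show ?thesis using flat_exp_has_real_derivative_0 by (simp add: flat_exp_def)
next
  case greater
  have i: "((\<lambda>t. inverse t) has_real_derivative - (inverse t ^ Suc (Suc 0))) (at t)"
    using greater by (intro DERIV_inverse) simp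
  have p: "((\<lambda>t. poly P (inverse t)) has_real_derivative
      poly (pderiv P) (inverse t) * - (inverse t ^ Suc (Suc 0))) (at t)"
    by (rule DERIV_chain2[OF poly_DERIV i])
  have e: "((\<lambda>t. exp (- inverse t)) has_real_derivative
      exp (- inverse t) * - (- (inverse t ^ Suc (Suc 0)))) (at t)"
    by (rule DERIV_chain2[OF DERIV_exp DERIV_minus[OF i]])
  have "((\<lambda>t. poly P (inverse t) * exp (- inverse t)) has_real_derivative
      poly P (inverse t) * (exp (- inverse t) * - (- (inverse t ^ Suc (Suc 0)))) +
      poly (pderiv P) (inverse t) * - (inverse t ^ Suc (Suc 0)) * exp (- inverse t)) (at t)"
    by (rule DERIV_mult'[OF p e])
  moreover have "poly P (inverse t) * (exp (- inverse t) * - (- (inverse t ^ Suc (Suc 0)))) +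
      poly (pderiv P) (inverse t) * - (inverse t ^ Suc (Suc 0)) * exp (- inverse t)
        = flat_exp (flat_exp_deriv_poly P) t"
    using greater by (simp add: flat_exp_def flat_exp_deriv_poly_def algebra_simps)
  ultimately have "((\<lambda>t. poly P (inverse t) * exp (- inverse t)) has_real_derivative
      flat_exp (flat_exp_deriv_poly P) t) (at t)"
    by simp
  then show ?thesis
    by (rule has_field_derivative_transform_within_open[where S="{0<..}"])
       (use greater in \<open>auto simp: flat_exp_def\<close>)
qed

lemma Ck_on_flat_exp_comp:
  assumes "open S" "\<forall>k. Ck_on k S q"
  shows "Ck_on k S (\<lambda>x. flat_exp P (q x))"
proof (induction k arbitrary: P)
  case 0
  have "continuous_on S q" using assms(2) Ck_on.simps(1) by blast
  moreover have "continuous_on UNIV (flat_exp P)"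
    using flat_exp_has_real_derivative DERIV_isCont continuous_at_imp_continuous_on by blast
  ultimately show ?case by (simp add: continuous_on_compose2[of UNIV "flat_exp P" S q])
next
  case (Suc k)
  have q1: "Ck_on (Suc k) S q" using assms(2) by blast
  have chain: "((\<lambda>x. flat_exp P (q x)) has_derivative
      (\<lambda>h. flat_exp (flat_exp_deriv_poly P) (q x) * frechet_derivative q (at x) h)) (at x)"
    if "x \<in> S" for x
  proof -
    have "(flat_exp P has_derivative (*) (flat_exp (flat_exp_deriv_poly P) (q x))) (at (q x))"
      using flat_exp_has_real_derivative by (simp add: has_field_derivative_def)
    moreover have "(q has_derivative frechet_derivative q (at x)) (at x)"
      using q1 that frechet_derivative_works by auto
    ultimately show ?thesis using has_derivative_compose by blast
  qed
  have "Ck_on k S (pderiv_coord i (\<lambda>x. flat_exp P (q x)))" for i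
  proof (rule Ck_on_cong_open[OF assms(1)])
    have "Ck_on k S (pderiv_coord i q)" using q1 by simp
    then show "Ck_on k S (\<lambda>x. flat_exp (flat_exp_deriv_poly P) (q x) * pderiv_coord i q x)"
      by (rule Ck_on_mult[OF assms(1) Suc.IH])
    show "\<forall>x\<in>S. flat_exp (flat_exp_deriv_poly P) (q x) * pderiv_coord i q x
        = pderiv_coord i (\<lambda>x. flat_exp P (q x)) x"
    proof
      fix x assume "x \<in> S"
      note e = frechet_derivative_at[OF chain[OF this]]
      show "flat_exp (flat_exp_deriv_poly P) (q x) * pderiv_coord i q x
          = pderiv_coord i (\<lambda>x. flat_exp P (q x)) x"
        unfolding pderiv_coord_def e[symmetric] by simp
    qed
  qed
  moreover have "\<forall>x\<in>S. (\<lambda>x. flat_exp P (q x)) differentiable (at x)"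
    using chain differentiable_def by blast
  ultimately show ?case by simp
qed


lemma atlas_chartD:
  assumes "smooth_atlas X A" "c \<in> A"
  shows "openin X (fst c)" "open (snd c ` fst c)"
    "homeomorphic_map (subtopology X (fst c)) (top_of_set (snd c ` fst c)) (snd c)"
    "fst c \<subseteq> topspace X" "inj_on (snd c) (fst c)"
proof -
  have "is_chart X c" using assms unfolding smooth_atlas_def by blast
  then show o: "openin X (fst c)" and "open (snd c ` fst c)"
    and h: "homeomorphic_map (subtopology X (fst c)) (top_of_set (snd c ` fst c)) (snd c)"
    unfolding is_chart_def by (auto split: prod.splits)
  show s: "fst c \<subseteq> topspace X" using o openin_subset by blast
  show "inj_on (snd c) (fst c)"
    using homeomorphic_imp_injective_map[OF h] s by (simp add: Int_absorb1)
qed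

lemma atlas_covers:
  assumes "smooth_atlas X A" "p \<in> topspace X"
  obtains c where "c \<in> A" "p \<in> fst c"
proof -
  have "topspace X = \<Union>(fst ` A)" using assms(1) unfolding smooth_atlas_def by blast
  with assms(2) that show thesis by blast
qed

lemma chart_inv_image:
  assumes "smooth_atlas X A" "c \<in> A" "z \<in> snd c ` (fst c \<inter> Ob)"
  shows "inv_into (fst c) (snd c) z \<in> fst c \<inter> Ob"
  proof -
  obtain w where "w \<in> fst c" "w \<in> Ob" "z = snd c w" using assms(3) by blast
  then show ?thesis using atlas_chartD(5)[OF assms(1,2)] by (simp add: inv_into_f_f)
qed

lemma chart_image_open:
  assumes "smooth_atlas X A" "c \<in> A" "openin X Ob"
  shows "open (snd c ` (fst c \<inter> Ob))"
proof -
  note c = atlas_chartD[OF assms(1,2)]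
  have "openin (subtopology X (fst c)) (fst c \<inter> Ob)"
    using openin_subtopology_Int2[OF assms(3)] .
  hence "openin (top_of_set (snd c ` fst c)) (snd c ` (fst c \<inter> Ob))"
    using homeomorphic_map_openness[OF c(3)] c(4) by (simp add: Int_absorb1)
  thus ?thesis using openin_open_trans c(2) by blast
qed

lemma chart_preimage_openin:
  assumes "smooth_atlas X A" "c \<in> A" "open B"
  shows "openin X {q \<in> fst c. snd c q \<in> B}"
proof -
  note c = atlas_chartD[OF assms(1,2)]
  have "snd c ` {q \<in> fst c. snd c q \<in> B} = snd c ` fst c \<inter> B" by auto
  moreover have "openin (top_of_set (snd c ` fst c)) (snd c ` fst c \<inter> B)"
    using openin_open_Int[OF assms(3)] .
  ultimately have "openin (subtopology X (fst c)) {q \<in> fst c. snd c q \<in> B}"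
    using homeomorphic_map_openness[OF c(3), of "{q \<in> fst c. snd c q \<in> B}"] c(4)
    by (auto simp: Int_absorb1)
  thus ?thesis using openin_trans_full c(1) by blast
qed

lemma chart_preimage_compactin:
  assumes "smooth_atlas X A" "c \<in> A" "compact K" "K \<subseteq> snd c ` fst c"
  shows "compactin X {q \<in> fst c. snd c q \<in> K}"
proof -
  note c = atlas_chartD[OF assms(1,2)]
  have "snd c ` {q \<in> fst c. snd c q \<in> K} = K" using assms(4) by auto
  moreover have "compactin (top_of_set (snd c ` fst c)) K"
    using assms(3,4) by (simp add: compactin_subtopology)
  ultimately have "compactin (subtopology X (fst c)) {q \<in> fst c. snd c q \<in> K}"
    using homeomorphic_map_compactness[OF c(3), of "{q \<in> fst c. snd c q \<in> K}"] c(4)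
    by (auto simp: Int_absorb1)
  thus ?thesis by (simp add: compactin_subtopology)
qed

lemma smooth_on_mfd_local:
  assumes atlas: "smooth_atlas X A"
    and local: "\<And>c q. c \<in> A \<Longrightarrow> q \<in> fst c \<Longrightarrow> \<exists>Ob. openin X Ob \<and> q \<in> Ob \<and>
        smooth_fun_on (snd c ` (fst c \<inter> Ob)) (f \<circ> inv_into (fst c) (snd c))"
  shows "smooth_on_mfd A f"
  unfolding smooth_on_mfd_def smooth_fun_on_def
proof (intro ballI allI Ck_on_local)
  fix c k y assume c: "c \<in> A" and "y \<in> snd c ` fst c"
  then obtain q where q: "q \<in> fst c" "y = snd c q" by auto
  with local[OF c] obtain Ob where Ob: "openin X Ob" "q \<in> Ob"
    "smooth_fun_on (snd c ` (fst c \<inter> Ob)) (f \<circ> inv_into (fst c) (snd c))"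
    by blast
  show "\<exists>T. open T \<and> y \<in> T \<and> T \<subseteq> snd c ` fst c \<and> Ck_on k T (f \<circ> inv_into (fst c) (snd c))"
  proof (intro exI conjI)
    show "open (snd c ` (fst c \<inter> Ob))" using chart_image_open[OF atlas c Ob(1)] .
  qed (use q Ob in \<open>auto simp: smooth_fun_on_def\<close>)
qed

lemma smooth_on_mfd_const: "smooth_on_mfd A (\<lambda>x. a)"
  unfolding smooth_on_mfd_def smooth_fun_on_def by (simp add: o_def Ck_on_const)

lemma smooth_on_mfd_mult:
  assumes "smooth_atlas X A" "smooth_on_mfd A f" "smooth_on_mfd A g"
  shows "smooth_on_mfd A (\<lambda>x. f x * g x)"
  using assms atlas_chartD(2)[OF assms(1)] Ck_on_mult
  unfolding smooth_on_mfd_def smooth_fun_on_def o_def by blast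

lemma smooth_on_mfd_diff:
  assumes "smooth_atlas X A" "smooth_on_mfd A f" "smooth_on_mfd A g"
  shows "smooth_on_mfd A (\<lambda>x. f x - g x)"
  using assms atlas_chartD(2)[OF assms(1)] Ck_on_diff
  unfolding smooth_on_mfd_def smooth_fun_on_def o_def by blast

lemma smooth_on_mfd_prod:
  assumes "smooth_atlas X A" "finite I" "\<forall>i\<in>I. smooth_on_mfd A (f i)"
  shows "smooth_on_mfd A (\<lambda>x. \<Prod>i\<in>I. f i x)"
  using assms(2,3)
proof (induction I rule: finite_induct)
  case empty then show ?case using smooth_on_mfd_const by simp
next
  case (insert a F)
  then show ?case
    using smooth_on_mfd_mult[OF assms(1), of "f a" "\<lambda>x. \<Prod>i\<in>F. f i x"] by simp
qed


section \<open>Bump functions\<close>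

text \<open>The squared distance is written as a coordinate sum so that its smoothness is immediate.\<close>
definition ball_bump :: "real^'d::finite \<Rightarrow> real \<Rightarrow> real^'d \<Rightarrow> real" where
  "ball_bump y0 r y = flat_exp 1 (r * r - (\<Sum>i\<in>UNIV. (y$i - y0$i) * (y$i - y0$i)))"

lemma ball_bump_dist: "ball_bump y0 r y = flat_exp 1 (r * r - dist y y0 * dist y y0)"
proof -
  have "dist y y0 * dist y y0 = (\<Sum>i\<in>UNIV. (dist (y$i) (y0$i))\<^sup>2)"
    unfolding dist_vec_def L2_set_def by (simp add: sum_nonneg flip: power2_eq_square)
  then show ?thesis
    unfolding ball_bump_def by (simp add: dist_real_def power2_eq_square)
qed

lemma ball_bump_bounds: "0 \<le> ball_bump y0 r y" "ball_bump y0 r y \<le> 1"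
  by (auto simp: ball_bump_def flat_exp_def)

lemma ball_bump_eq_0:
  assumes "r > 0" "y \<notin> cball y0 r"
  shows "ball_bump y0 r y = 0"
proof -
  have "r * r \<le> dist y y0 * dist y y0"
    using assms by (simp add: dist_commute mult_mono)
  then show ?thesis by (simp add: ball_bump_dist flat_exp_def)
qed

lemma flat_exp_1_mono: "0 < a \<Longrightarrow> a \<le> b \<Longrightarrow> flat_exp 1 a \<le> flat_exp 1 b"
  by (simp add: flat_exp_def le_imp_inverse_le)

lemma ball_bump_lower_bound:
  assumes "r > 0" "y \<in> ball y0 (r / 2)"
  shows "flat_exp 1 (3/4 * r * r) \<le> ball_bump y0 r y"
proof -
  have "dist y y0 * dist y y0 \<le> (r/2) * (r/2)"
    using assms by (intro mult_mono) (auto simp: dist_commute)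
  then have "3/4 * r * r \<le> r * r - dist y y0 * dist y y0" by (simp add: field_simps)
  moreover have "0 < 3/4 * r * r" using assms(1) by simp
  ultimately show ?thesis
    unfolding ball_bump_dist by (rule flat_exp_1_mono[rotated])
qed

lemma Ck_on_ball_bump_comp:
  assumes "open S" "\<forall>j k. Ck_on k S (\<lambda>z. T z $ j)"
  shows "Ck_on k S (\<lambda>z. ball_bump y0 r (T z))"
  unfolding ball_bump_def
proof (intro Ck_on_flat_exp_comp[OF assms(1)] allI)
  fix k
  have "Ck_on k S (\<lambda>z. T z $ i - y0 $ i)" for i
    using assms(2) by (intro Ck_on_diff[OF assms(1)] Ck_on_const) auto
  then have "Ck_on k S (\<lambda>z. (T z $ i - y0 $ i) * (T z $ i - y0 $ i))" for i
    using Ck_on_mult[OF assms(1)] by blast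
  then have "Ck_on k S (\<lambda>z. \<Sum>i\<in>UNIV. (T z $ i - y0 $ i) * (T z $ i - y0 $ i))"
    using Ck_on_sum[OF assms(1), of UNIV k "\<lambda>i z. (T z $ i - y0 $ i) * (T z $ i - y0 $ i)"]
    by simp
  then show "Ck_on k S (\<lambda>z. r * r - (\<Sum>i\<in>UNIV. (T z $ i - y0 $ i) * (T z $ i - y0 $ i)))"
    by (rule Ck_on_diff[OF assms(1) Ck_on_const])
qed

definition chart_bump :: "('m, 'd::finite) chart \<Rightarrow> real^'d \<Rightarrow> real \<Rightarrow> 'm \<Rightarrow> real" where
  "chart_bump c y0 r q = (if q \<in> fst c then ball_bump y0 r (snd c q) else 0)"

lemma chart_bump_bounds: "0 \<le> chart_bump c y0 r q" "chart_bump c y0 r q \<le> 1"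
  by (auto simp: chart_bump_def ball_bump_bounds)

lemma smooth_on_mfd_chart_bump:
  assumes atlas: "smooth_atlas X A" and H: "Hausdorff_space X" and c: "c \<in> A" and "r > 0"
    and "cball y0 r \<subseteq> snd c ` fst c"
  shows "smooth_on_mfd A (chart_bump c y0 r)"
proof (rule smooth_on_mfd_local[OF atlas])
  fix c' q assume c': "c' \<in> A" and q: "q \<in> fst c'"
  let ?\<psi> = "inv_into (fst c') (snd c')"
  show "\<exists>Ob. openin X Ob \<and> q \<in> Ob \<and>
      smooth_fun_on (snd c' ` (fst c' \<inter> Ob)) (chart_bump c y0 r \<circ> ?\<psi>)"
  proof (cases "q \<in> fst c")
    case True
    let ?T = "snd c' ` (fst c' \<inter> fst c)"
    have T: "open ?T" using chart_image_open[OF atlas c' atlas_chartD(1)[OF atlas c]] .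
    have "smooth_map_on ?T (transition c' c)"
      using atlas c c' unfolding smooth_atlas_def by blast
    then have ck: "Ck_on k ?T (\<lambda>z. ball_bump y0 r (transition c' c z))" for k
      unfolding smooth_map_on_def smooth_fun_on_def by (intro Ck_on_ball_bump_comp[OF T]) blast
    have eq: "\<forall>z\<in>?T. ball_bump y0 r (transition c' c z) = (chart_bump c y0 r \<circ> ?\<psi>) z"
    proof
      fix z assume "z \<in> ?T"
      then have "?\<psi> z \<in> fst c" by (rule IntD2[OF chart_inv_image[OF atlas c']])
      then show "ball_bump y0 r (transition c' c z) = (chart_bump c y0 r \<circ> ?\<psi>) z"
        by (simp add: transition_def chart_bump_def)
    qed
    have "smooth_fun_on ?T (chart_bump c y0 r \<circ> ?\<psi>)"
      unfolding smooth_fun_on_def using Ck_on_cong_open[OF T eq ck] by blast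
    then show ?thesis using True atlas_chartD(1)[OF atlas c] by blast
  next
    case False
    let ?Ob = "topspace X - {q \<in> fst c. snd c q \<in> cball y0 r}"
    let ?T = "snd c' ` (fst c' \<inter> ?Ob)"
    have Ob: "openin X ?Ob"
      using compactin_imp_closedin[OF H chart_preimage_compactin[OF atlas c compact_cball assms(5)]]
      by blast
    then have T: "open ?T" by (rule chart_image_open[OF atlas c'])
    have eq: "\<forall>z\<in>?T. 0 = (chart_bump c y0 r \<circ> ?\<psi>) z"
    proof
      fix z assume "z \<in> ?T"
      then have "?\<psi> z \<in> ?Ob" by (rule IntD2[OF chart_inv_image[OF atlas c']])
      then show "0 = (chart_bump c y0 r \<circ> ?\<psi>) z"
        using ball_bump_eq_0[OF \<open>r > 0\<close>] by (auto simp: chart_bump_def)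
    qed
    have "smooth_fun_on ?T (chart_bump c y0 r \<circ> ?\<psi>)"
      unfolding smooth_fun_on_def using Ck_on_cong_open[OF T eq Ck_on_const] by blast
    moreover have "q \<in> ?Ob" using False q atlas_chartD(4)[OF atlas c'] by auto
    ultimately show ?thesis using Ob by blast
  qed
qed

lemma chart_bump_lower_bound:
  assumes "r > 0" "q \<in> fst c" "snd c q \<in> ball y0 (r / 2)"
  shows "flat_exp 1 (3/4 * r * r) \<le> chart_bump c y0 r q"
  using ball_bump_lower_bound[OF assms(1,3)] assms(2) by (simp add: chart_bump_def)

lemma chart_bump_eq_0:
  assumes "r > 0" "q \<notin> {q \<in> fst c. snd c q \<in> cball y0 r}"
  shows "chart_bump c y0 r q = 0"
  using ball_bump_eq_0[OF assms(1)] assms(2) by (auto simp: chart_bump_def)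

lemma exists_chart_cball:
  assumes atlas: "smooth_atlas X A" and V: "openin X V" and p: "p \<in> V"
  obtains c r where "c \<in> A" "p \<in> fst c" "0 < r" "cball (snd c p) r \<subseteq> snd c ` (fst c \<inter> V)"
proof -
  obtain c where c: "c \<in> A" "p \<in> fst c"
    using atlas_covers[OF atlas] openin_subset[OF V] p by blast
  have "open (snd c ` (fst c \<inter> V))" using chart_image_open[OF atlas c(1) V] .
  moreover have "snd c p \<in> snd c ` (fst c \<inter> V)" using c p by auto
  ultimately obtain r where "r > 0" "cball (snd c p) r \<subseteq> snd c ` (fst c \<inter> V)"
    using open_contains_cball by blast
  with c that show thesis by blast
qed

lemma chart_preimage_subset:
  assumes atlas: "smooth_atlas X A" and c: "c \<in> A" and "B \<subseteq> snd c ` (fst c \<inter> V)"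
  shows "{q \<in> fst c. snd c q \<in> B} \<subseteq> V"
proof
  fix q assume q: "q \<in> {q \<in> fst c. snd c q \<in> B}"
  then obtain w where "w \<in> fst c" "w \<in> V" "snd c q = snd c w" using assms(3) by blast
  moreover have "q \<in> fst c" using q by simp
  ultimately show "q \<in> V" using inj_onD[OF atlas_chartD(5)[OF atlas c]] by metis
qed

lemma one_minus_prod_one_minus_bounds:
  fixes b :: "'a \<Rightarrow> real"
  assumes "finite P" "\<forall>i\<in>P. 0 \<le> b i \<and> b i \<le> 1"
  shows "0 \<le> 1 - (\<Prod>i\<in>P. 1 - b i)" "1 - (\<Prod>i\<in>P. 1 - b i) \<le> 1"
    and "j \<in> P \<Longrightarrow> b j \<le> 1 - (\<Prod>i\<in>P. 1 - b i)"
proof -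
  show "0 \<le> 1 - (\<Prod>i\<in>P. 1 - b i)" using assms(2) by (simp add: prod_le_1)
  show "1 - (\<Prod>i\<in>P. 1 - b i) \<le> 1" using assms(2) by (simp add: prod_nonneg)
  assume "j \<in> P"
  then have "(\<Prod>i\<in>P. 1 - b i) = (1 - b j) * (\<Prod>i\<in>P - {j}. 1 - b i)"
    using assms(1) by (simp add: prod.remove)
  also have "\<dots> \<le> 1 - b j"
    using assms(2) \<open>j \<in> P\<close> by (intro mult_left_le prod_le_1) auto
  finally show "b j \<le> 1 - (\<Prod>i\<in>P. 1 - b i)" by simp
qed

lemma exists_finite_chart_ball_cover:
  fixes A :: "('m, 'd::finite) chart set"
  assumes atlas: "smooth_atlas X A" and K: "compactin X K" and V: "openin X V" and "K \<subseteq> V"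
  obtains P c r where "finite P"
    "\<And>p. p \<in> P \<Longrightarrow>
      c p \<in> A \<and> 0 < r p \<and> cball (snd (c p) p) (r p) \<subseteq> snd (c p) ` (fst (c p) \<inter> V)"
    "K \<subseteq> (\<Union>p\<in>P. {q \<in> fst (c p). snd (c p) q \<in> ball (snd (c p) p) (r p / 2)})"
proof -
  have "\<exists>c r. c \<in> A \<and> p \<in> fst c \<and> 0 < r \<and> cball (snd c p) r \<subseteq> snd c ` (fst c \<inter> V)"
    if "p \<in> K" for p
  proof -
    have "p \<in> V" using that \<open>K \<subseteq> V\<close> by blast
    then obtain c r
      where "c \<in> A" "p \<in> fst c" "0 < r" "cball (snd c p) r \<subseteq> snd c ` (fst c \<inter> V)"
      by (rule exists_chart_cball[OF atlas V])
    then show ?thesis by blast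
  qed
  then obtain c r where cr: "\<And>p. p \<in> K \<Longrightarrow> c p \<in> A \<and> p \<in> fst (c p) \<and> 0 < r p \<and>
      cball (snd (c p) p) (r p) \<subseteq> snd (c p) ` (fst (c p) \<inter> V)"
    by metis
  define Ob where "Ob p = {q \<in> fst (c p). snd (c p) q \<in> ball (snd (c p) p) (r p / 2)}" for p
  have "K \<subseteq> \<Union>(Ob ` K)" using cr by (force simp: Ob_def)
  moreover have "openin X (Ob p)" if "p \<in> K" for p
    unfolding Ob_def using chart_preimage_openin[OF atlas _ open_ball] cr[OF that] by blast
  ultimately obtain P where P: "P \<subseteq> K" "finite P" "K \<subseteq> \<Union>(Ob ` P)"
    using K unfolding compactin_def by (metis (no_types, lifting) finite_subset_image imageE)
  show thesis
  proof (rule that[of P c r])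
    show "c p \<in> A \<and> 0 < r p \<and> cball (snd (c p) p) (r p) \<subseteq> snd (c p) ` (fst (c p) \<inter> V)"
      if "p \<in> P" for p
      using cr that P(1) by blast
  qed (use P in \<open>auto simp: Ob_def\<close>)
qed

text \<open>The cutoff is 1 - \<Prod>(1 - \<beta>_p) for the chart bumps \<beta>_p of a finite cover of K
  by chart balls.\<close>
lemma exists_smooth_cutoff:
  fixes A :: "('m, 'd::finite) chart set"
  assumes atlas: "smooth_atlas X A" and H: "Hausdorff_space X"
    and K: "compactin X K" and V: "openin X V" and "K \<subseteq> V"
  obtains h c0 C where "smooth_on_mfd A h" "\<forall>q. 0 \<le> h q \<and> h q \<le> 1" "0 < c0"
    "\<forall>q\<in>K. c0 \<le> h q" "closedin X C" "C \<subseteq> V" "\<forall>q. q \<notin> C \<longrightarrow> h q = 0"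
proof -
  obtain P c r where P: "finite P"
    and cr: "\<And>p. p \<in> P \<Longrightarrow>
      c p \<in> A \<and> 0 < r p \<and> cball (snd (c p) p) (r p) \<subseteq> snd (c p) ` (fst (c p) \<inter> V)"
    and cover: "K \<subseteq> (\<Union>p\<in>P. {q \<in> fst (c p). snd (c p) q \<in> ball (snd (c p) p) (r p / 2)})"
    using exists_finite_chart_ball_cover[OF atlas K V \<open>K \<subseteq> V\<close>] by blast
  define \<beta> where "\<beta> p = chart_bump (c p) (snd (c p) p) (r p)" for p
  define C where "C p = {q \<in> fst (c p). snd (c p) q \<in> cball (snd (c p) p) (r p)}" for p
  define h where "h q = 1 - (\<Prod>p\<in>P. 1 - \<beta> p q)" for q
  define c0 where "c0 = Min (insert 1 ((\<lambda>p. flat_exp 1 (3/4 * r p * r p)) ` P))"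
  have cball: "cball (snd (c p) p) (r p) \<subseteq> snd (c p) ` fst (c p)" if "p \<in> P" for p
    using cr[OF that] by blast
  have bounds: "\<forall>p\<in>P. 0 \<le> \<beta> p q \<and> \<beta> p q \<le> 1" for q
    by (simp add: \<beta>_def chart_bump_bounds)
  have "smooth_on_mfd A (\<lambda>q. 1 - \<beta> p q)" if "p \<in> P" for p
    using smooth_on_mfd_chart_bump[OF atlas H _ _ cball] cr that unfolding \<beta>_def
    by (intro smooth_on_mfd_diff[OF atlas smooth_on_mfd_const]) blast
  then have "smooth_on_mfd A h"
    unfolding h_def
    by (intro smooth_on_mfd_diff[OF atlas] smooth_on_mfd_const smooth_on_mfd_prod[OF atlas P]) blast
  moreover have "\<forall>q. 0 \<le> h q \<and> h q \<le> 1"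
    using one_minus_prod_one_minus_bounds[OF P bounds] by (simp add: h_def)
  moreover have "0 < c0"
    unfolding c0_def using P cr by (subst Min_gr_iff) (auto simp: flat_exp_def)
  moreover have "\<forall>q\<in>K. c0 \<le> h q"
  proof
    fix q assume "q \<in> K"
    then obtain p where p: "p \<in> P" "q \<in> fst (c p)" "snd (c p) q \<in> ball (snd (c p) p) (r p / 2)"
      using cover by blast
    have "c0 \<le> flat_exp 1 (3/4 * r p * r p)" unfolding c0_def using P p(1) by (intro Min_le) auto
    also have "\<dots> \<le> \<beta> p q"
      unfolding \<beta>_def using p cr by (intro chart_bump_lower_bound) auto
    also have "\<dots> \<le> h q"
      unfolding h_def by (rule one_minus_prod_one_minus_bounds(3)[OF P bounds p(1)])
    finally show "c0 \<le> h q" .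
  qed
  moreover have "closedin X (\<Union>(C ` P))"
  proof -
    have "compactin X (C p)" if "p \<in> P" for p
      unfolding C_def using chart_preimage_compactin[OF atlas _ compact_cball cball] cr that
      by blast
    then have "compactin X (\<Union>(C ` P))" using P by (intro compactin_Union) auto
    then show ?thesis by (rule compactin_imp_closedin[OF H])
  qed
  moreover have "\<Union>(C ` P) \<subseteq> V"
    unfolding C_def using chart_preimage_subset[OF atlas] cr by blast
  moreover have "\<forall>q. q \<notin> \<Union>(C ` P) \<longrightarrow> h q = 0"
  proof (intro allI impI)
    fix q assume "q \<notin> \<Union>(C ` P)"
    then have "\<beta> p q = 0" if "p \<in> P" for p
      unfolding \<beta>_def using chart_bump_eq_0[of "r p" q "c p"] cr that by (auto simp: C_def)
    then show "h q = 0" by (simp add: h_def)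
  qed
  ultimately show thesis using that by blast
qed


section \<open>Locality of the Poisson bracket\<close>

lemma grad_coord_chart_cong:
  assumes atlas: "smooth_atlas X A" and c: "c \<in> A" and Ob: "openin X Ob"
    and "p \<in> fst c" "p \<in> Ob" and eq: "\<forall>q\<in>Ob. F q = G q"
  shows "grad_coord (F \<circ> inv_into (fst c) (snd c)) (snd c p)
       = grad_coord (G \<circ> inv_into (fst c) (snd c)) (snd c p)"
proof -
  let ?T = "snd c ` (fst c \<inter> Ob)"
  have eqT: "\<forall>z\<in>?T. (F \<circ> inv_into (fst c) (snd c)) z = (G \<circ> inv_into (fst c) (snd c)) z"
  proof
    fix z assume "z \<in> ?T"
    then have "inv_into (fst c) (snd c) z \<in> Ob" by (rule IntD2[OF chart_inv_image[OF atlas c]])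
    then show "(F \<circ> inv_into (fst c) (snd c)) z = (G \<circ> inv_into (fst c) (snd c)) z"
      using eq by simp
  qed
  have "snd c p \<in> ?T" using assms(4,5) by blast
  then have "pderiv_coord i (F \<circ> inv_into (fst c) (snd c)) (snd c p)
      = pderiv_coord i (G \<circ> inv_into (fst c) (snd c)) (snd c p)" for i
    by (rule pderiv_coord_cong_open[OF chart_image_open[OF atlas c Ob] _ eqT])
  then show ?thesis unfolding grad_coord_def by simp
qed

lemma poisson_bracket_cong:
  assumes atlas: "smooth_atlas X A" and p: "p \<in> topspace X" and Ob: "openin X Ob" "p \<in> Ob"
    and "\<forall>q\<in>Ob. F q = F' q" "\<forall>q\<in>Ob. G q = G' q"
  shows "poisson_bracket A W F G p = poisson_bracket A W F' G' p"
proof -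
  define c where "c = (SOME c. c \<in> A \<and> p \<in> fst c)"
  have "\<exists>c. c \<in> A \<and> p \<in> fst c" using atlas_covers[OF atlas p] by blast
  then have c: "c \<in> A \<and> p \<in> fst c" unfolding c_def by (rule someI_ex)
  note cong = grad_coord_chart_cong[OF atlas conjunct1[OF c] Ob(1) conjunct2[OF c] Ob(2)]
  show ?thesis
    unfolding poisson_bracket_def Let_def c_def[symmetric] cong[OF assms(5)] cong[OF assms(6)] ..
qed

lemma poisson_bracket_locally_const_right:
  assumes atlas: "smooth_atlas X A" and p: "p \<in> topspace X" and Ob: "openin X Ob" "p \<in> Ob"
    and "\<forall>q\<in>Ob. G q = k"
  shows "poisson_bracket A W F G p = 0"
proof -
  have "poisson_bracket A W F G p = poisson_bracket A W F (\<lambda>_. k) p"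
    using assms by (intro poisson_bracket_cong[OF atlas p Ob]) auto
  also have "\<dots> = 0"
    by (simp add: poisson_bracket_def Let_def grad_coord_def o_def zero_vec_def[symmetric])
  finally show ?thesis .
qed

lemma poisson_bracket_modify_left:
  assumes atlas: "smooth_atlas X A" and U: "openin X U" and C: "closedin X C" "C \<subseteq> U"
    and G: "\<forall>q\<in>U. G q = k" and F': "\<forall>q. q \<notin> C \<longrightarrow> F' q = F q" and p: "p \<in> topspace X"
  shows "poisson_bracket A W F' G p = poisson_bracket A W F G p"
proof (cases "p \<in> U")
  case True
  then show ?thesis
    using poisson_bracket_locally_const_right[OF atlas p U True G] by simp
next
  case False
  have "openin X (topspace X - C)" using C(1) by blast
  moreover have "p \<in> topspace X - C" using p False C(2) by blast
  ultimately show ?thesis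
    using F' by (intro poisson_bracket_cong[OF atlas p]) auto
qed


section \<open>Pushing maps into the square off the corners\<close>

definition corner_push :: "real \<Rightarrow> real \<Rightarrow> real \<Rightarrow> real" where
  "corner_push a b t = (1 - (1 - t) * (1 - a / 3)) * (1 - b / 3)"

lemma corner_push_0_0: "corner_push 0 0 t = t"
  by (simp add: corner_push_def)

lemma corner_push_left_corner: "corner_push 0 b 0 = 0"
  by (simp add: corner_push_def)

lemma corner_push_right_corner: "corner_push a 0 1 = 1"
  by (simp add: corner_push_def)

lemma corner_push_bounds:
  assumes "0 \<le> t" "t \<le> 1" "0 \<le> a" "a \<le> 1" "0 \<le> b" "b \<le> 1"
  shows "0 \<le> corner_push a b t" "corner_push a b t \<le> 1"
proof -
  have "0 \<le> (1 - t) * (1 - a / 3)" "(1 - t) * (1 - a / 3) \<le> 1"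
    using assms by (auto intro!: mult_le_one)
  then show "0 \<le> corner_push a b t" "corner_push a b t \<le> 1"
    using assms unfolding corner_push_def by (auto intro!: mult_le_one)
qed

lemma corner_push_lower_bound:
  assumes "0 \<le> t" "t \<le> 1" "0 \<le> a" "a \<le> 1" "c \<le> a" "0 \<le> b" "b \<le> 1"
  shows "2 * c / 9 \<le> corner_push a b t"
proof -
  have "(1 - t) * (1 - a / 3) \<le> 1 * (1 - c / 3)"
    using assms by (intro mult_mono) auto
  then have "c / 3 \<le> 1 - (1 - t) * (1 - a / 3)" by simp
  moreover have "0 \<le> 1 - (1 - t) * (1 - a / 3)"
    using assms by (simp add: mult_le_one)
  ultimately have "c / 3 * (2 / 3) \<le> (1 - (1 - t) * (1 - a / 3)) * (1 - b / 3)"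
    using assms by (intro mult_mono) auto
  then show ?thesis by (simp add: corner_push_def)
qed

lemma corner_push_upper_bound:
  assumes "0 \<le> t" "t \<le> 1" "0 \<le> a" "a \<le> 1" "c \<le> b" "b \<le> 1"
  shows "corner_push a b t \<le> 1 - c / 3"
proof -
  have "0 \<le> 1 - (1 - t) * (1 - a / 3)" "1 - (1 - t) * (1 - a / 3) \<le> 1"
    using assms by (auto simp: mult_le_one)
  then have "(1 - (1 - t) * (1 - a / 3)) * (1 - b / 3) \<le> 1 * (1 - c / 3)"
    using assms by (intro mult_mono) auto
  then show ?thesis by (simp add: corner_push_def)
qed

lemma exists_push_off_endpoints:
  fixes A :: "('m, 'd::finite) chart set" and f :: "'m \<Rightarrow> real"
  assumes atlas: "smooth_atlas X A" and H: "Hausdorff_space X"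
    and f: "smooth_on_mfd A f" "\<forall>q\<in>topspace X. 0 \<le> f q \<and> f q \<le> 1"
    and U: "openin X U" and K0: "compactin X K0" and K1: "compactin X K1" and "K0 \<union> K1 \<subseteq> U"
    and L0: "closedin X L0" and L1: "closedin X L1" and "K0 \<inter> L0 = {}" "K1 \<inter> L1 = {}"
  obtains g C \<delta> where "smooth_on_mfd A g" "\<forall>q\<in>topspace X. 0 \<le> g q \<and> g q \<le> 1"
    "closedin X C" "C \<subseteq> U" "\<forall>q. q \<notin> C \<longrightarrow> g q = f q"
    "\<forall>q\<in>L0. f q = 0 \<longrightarrow> g q = 0" "\<forall>q\<in>L1. f q = 1 \<longrightarrow> g q = 1"
    "0 < \<delta>" "\<forall>q\<in>K0. \<delta> \<le> g q" "\<forall>q\<in>K1. g q \<le> 1 - \<delta>"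
proof -
  have "openin X (U - L0)" "K0 \<subseteq> U - L0" using U L0 assms(8,11) by auto
  then obtain a ca Ca where
    a: "smooth_on_mfd A a" "\<forall>q. 0 \<le> a q \<and> a q \<le> 1" "0 < ca" "\<forall>q\<in>K0. ca \<le> a q"
      "closedin X Ca" "Ca \<subseteq> U - L0" "\<forall>q. q \<notin> Ca \<longrightarrow> a q = 0"
    by (rule exists_smooth_cutoff[OF atlas H K0])
  have "openin X (U - L1)" "K1 \<subseteq> U - L1" using U L1 assms(8,12) by auto
  then obtain b cb Cb where
    b: "smooth_on_mfd A b" "\<forall>q. 0 \<le> b q \<and> b q \<le> 1" "0 < cb" "\<forall>q\<in>K1. cb \<le> b q"
      "closedin X Cb" "Cb \<subseteq> U - L1" "\<forall>q. q \<notin> Cb \<longrightarrow> b q = 0"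
    by (rule exists_smooth_cutoff[OF atlas H K1])
  define g where "g q = corner_push (a q) (b q) (f q)" for q
  define \<delta> where "\<delta> = min (2 * ca / 9) (cb / 3)"
  have f_bounds: "0 \<le> f q" "f q \<le> 1" if "q \<in> K0 \<union> K1" for q
    using that f(2) K0 K1 compactin_subset_topspace by blast+
  have "smooth_on_mfd A (\<lambda>q. a q / 3)" "smooth_on_mfd A (\<lambda>q. b q / 3)"
    using smooth_on_mfd_mult[OF atlas _ smooth_on_mfd_const, of _ "1/3"] a(1) b(1) by simp_all
  then have "smooth_on_mfd A g"
    unfolding g_def corner_push_def
    by (intro smooth_on_mfd_mult[OF atlas] smooth_on_mfd_diff[OF atlas] smooth_on_mfd_const f(1))
  moreover have "\<forall>q\<in>topspace X. 0 \<le> g q \<and> g q \<le> 1"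
    using f(2) a(2) b(2) corner_push_bounds by (simp add: g_def)
  moreover have "closedin X (Ca \<union> Cb)" "Ca \<union> Cb \<subseteq> U" using a(5,6) b(5,6) by auto
  moreover have "\<forall>q. q \<notin> Ca \<union> Cb \<longrightarrow> g q = f q"
    using a(7) b(7) by (simp add: g_def corner_push_0_0)
  moreover have "\<forall>q\<in>L0. f q = 0 \<longrightarrow> g q = 0"
    using a(6,7) by (auto simp: g_def corner_push_left_corner)
  moreover have "\<forall>q\<in>L1. f q = 1 \<longrightarrow> g q = 1"
    using b(6,7) by (auto simp: g_def corner_push_right_corner)
  moreover have "0 < \<delta>" using a(3) b(3) by (simp add: \<delta>_def)
  moreover have "\<forall>q\<in>K0. \<delta> \<le> g q"
  proof
    fix q assume q: "q \<in> K0"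
    have "2 * ca / 9 \<le> g q"
      unfolding g_def using q f_bounds a(2,4) b(2) by (intro corner_push_lower_bound) auto
    then show "\<delta> \<le> g q" by (simp add: \<delta>_def)
  qed
  moreover have "\<forall>q\<in>K1. g q \<le> 1 - \<delta>"
  proof
    fix q assume q: "q \<in> K1"
    have "g q \<le> 1 - cb / 3"
      unfolding g_def using q f_bounds a(2) b(2,4) by (intro corner_push_upper_bound) auto
    then show "g q \<le> 1 - \<delta>" by (simp add: \<delta>_def)
  qed
  ultimately show thesis using that by blast
qed

lemma exists_square_map_off_corners:
  fixes A :: "('m, 'd::finite) chart set" and \<Phi> :: "'m \<Rightarrow> real \<times> real"
  assumes atlas: "smooth_atlas X A" and H: "Hausdorff_space X"
    and smooth: "smooth_on_mfd A (\<lambda>x. fst (\<Phi> x))" "smooth_on_mfd A (\<lambda>x. snd (\<Phi> x))"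
    and square: "\<Phi> ` topspace X \<subseteq> unit_square"
    and U: "openin X U" "\<Phi> ` U \<subseteq> {(x, 1) | x. 0 \<le> x \<and> x \<le> 1}"
    and K: "compactin X K0" "compactin X K1" "K0 \<union> K1 \<subseteq> U"
    and L: "closedin X L0" "closedin X L1" "K0 \<inter> L0 = {}" "K1 \<inter> L1 = {}"
  obtains \<Psi> \<delta> where "smooth_on_mfd A (\<lambda>x. fst (\<Psi> x))" "smooth_on_mfd A (\<lambda>x. snd (\<Psi> x))"
    "\<Psi> ` topspace X \<subseteq> unit_square" "\<forall>q. q \<notin> U \<longrightarrow> \<Psi> q = \<Phi> q"
    "\<forall>q\<in>L0. \<Phi> q = (0, 1) \<longrightarrow> \<Psi> q = \<Phi> q" "\<forall>q\<in>L1. \<Phi> q = (1, 1) \<longrightarrow> \<Psi> q = \<Phi> q"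
    "0 < \<delta>" "\<Psi> ` K0 \<subseteq> {(x, 1) | x. 0 \<le> x \<and> x \<le> 1} - ball (0, 1) \<delta>"
    "\<Psi> ` K1 \<subseteq> {(x, 1) | x. 0 \<le> x \<and> x \<le> 1} - ball (1, 1) \<delta>"
    "\<forall>p\<in>topspace X. poisson_bracket A W (\<lambda>x. fst (\<Psi> x)) (\<lambda>x. snd (\<Psi> x)) p
       = poisson_bracket A W (\<lambda>x. fst (\<Phi> x)) (\<lambda>x. snd (\<Phi> x)) p"
proof -
  have "\<forall>q\<in>topspace X. 0 \<le> fst (\<Phi> q) \<and> fst (\<Phi> q) \<le> 1"
    using square by (auto simp: unit_square_def)
  then obtain g C \<delta> where g: "smooth_on_mfd A g" "\<forall>q\<in>topspace X. 0 \<le> g q \<and> g q \<le> 1"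
      "closedin X C" "C \<subseteq> U" "\<forall>q. q \<notin> C \<longrightarrow> g q = fst (\<Phi> q)"
      "\<forall>q\<in>L0. fst (\<Phi> q) = 0 \<longrightarrow> g q = 0" "\<forall>q\<in>L1. fst (\<Phi> q) = 1 \<longrightarrow> g q = 1"
      "0 < \<delta>" "\<forall>q\<in>K0. \<delta> \<le> g q" "\<forall>q\<in>K1. g q \<le> 1 - \<delta>"
    by (rule exists_push_off_endpoints[OF atlas H smooth(1) _ U(1) K L])
  define \<Psi> where "\<Psi> q = (g q, snd (\<Phi> q))" for q
  have on_U: "snd (\<Phi> q) = 1" if "q \<in> U" for q using U(2) that by auto
  have on_K: "\<Psi> q = (g q, 1)" "q \<in> topspace X" if "q \<in> K0 \<union> K1" for q
    using that K on_U compactin_subset_topspace by (auto simp: \<Psi>_def)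
  show thesis
  proof (rule that)
    show "smooth_on_mfd A (\<lambda>x. fst (\<Psi> x))" "smooth_on_mfd A (\<lambda>x. snd (\<Psi> x))"
      using g(1) smooth(2) by (simp_all add: \<Psi>_def)
    show "\<Psi> ` topspace X \<subseteq> unit_square"
      using g(2) square by (auto simp: \<Psi>_def unit_square_def)
    show "\<forall>q. q \<notin> U \<longrightarrow> \<Psi> q = \<Phi> q"
      using g(4,5) by (auto simp: \<Psi>_def prod_eq_iff)
    show "\<forall>q\<in>L0. \<Phi> q = (0, 1) \<longrightarrow> \<Psi> q = \<Phi> q"
      and "\<forall>q\<in>L1. \<Phi> q = (1, 1) \<longrightarrow> \<Psi> q = \<Phi> q"
      using g(6,7) by (auto simp: \<Psi>_def)
    show "\<Psi> ` K0 \<subseteq> {(x, 1) | x. 0 \<le> x \<and> x \<le> 1} - ball (0, 1) \<delta>"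
      using on_K g(2,9) by (auto simp: dist_Pair_Pair dist_real_def)
    show "\<Psi> ` K1 \<subseteq> {(x, 1) | x. 0 \<le> x \<and> x \<le> 1} - ball (1, 1) \<delta>"
      using on_K g(2,10) by (auto simp: dist_Pair_Pair dist_real_def)
    have "\<forall>q\<in>U. snd (\<Phi> q) = 1" using on_U by blast
    from poisson_bracket_modify_left[OF atlas U(1) g(3,4) this g(5)]
    show "\<forall>p\<in>topspace X. poisson_bracket A W (\<lambda>x. fst (\<Psi> x)) (\<lambda>x. snd (\<Psi> x)) p
       = poisson_bracket A W (\<lambda>x. fst (\<Phi> x)) (\<lambda>x. snd (\<Phi> x)) p"
      by (simp add: \<Psi>_def)
  qed (use g(8) in simp)
qed


lemma sq_arc_top:
  assumes "3 \<le> N"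
  shows "sq_arc N s (N - 1) = {(x, 1) | x. 0 \<le> x \<and> x \<le> 1}"
proof -
  have "N - 1 \<noteq> 1" "\<not> (2 \<le> N - 1 \<and> N - 1 \<le> N - 3)" "N - 1 \<noteq> N - 2" using assms by auto
  then show ?thesis by (simp add: sq_arc_def)
qed

lemma sq_arc_top_point:
  assumes "4 \<le> N" "k \<in> {1..N-2}" "(x, 1) \<in> sq_arc N s k"
  shows "(k = 1 \<and> x = 0) \<or> (k = N - 2 \<and> x = 1)"
  using assms by (auto simp: sq_arc_def split: if_splits)

lemma intersect_cyclically_disjoint:
  assumes "intersect_cyclically N Xs" "1 \<le> i" "i + 2 \<le> j" "j \<le> N" "j + 2 \<le> N + i"
  shows "Xs i \<inter> Xs j = {}"
proof (rule assms(1)[unfolded intersect_cyclically_def, rule_format])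
  show "i \<in> {1..N}" "j \<in> {1..N}" using assms(2-4) by auto
  have i: "i mod N = i" using assms(3,4) by simp
  show "\<not> (i mod N = (j + N - 1) mod N \<or> i mod N = j mod N \<or> i mod N = (j + 1) mod N)"
  proof (cases "j = N")
    case True
    have "(j + N - 1) mod N = N - 1" "j mod N = 0" "(j + 1) mod N = 1"
      using True assms(2,3) by (simp_all add: mod_if)
    then show ?thesis using i assms(3,5) True by simp
  next
    case False
    have "(j + N - 1) mod N = j - 1" "j mod N = j" "(j + 1) mod N = (if j + 1 = N then 0 else j + 1)"
      using False assms(2-4) by (simp_all add: mod_if)
    then show ?thesis using i assms(2,3) by auto
  qed
qed

lemma F'_class_sq_arcD:
  assumes "4 \<le> N"
    and "\<Phi> \<in> F'_class X A unit_square (sq_arc N s) (N - 1)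
      (\<lambda>i. if i = N - 1 then Xs (N - 1) \<union> Xs N else Xs i)"
  obtains U where "smooth_on_mfd A (\<lambda>x. fst (\<Phi> x))" "smooth_on_mfd A (\<lambda>x. snd (\<Phi> x))"
    "\<Phi> ` topspace X \<subseteq> unit_square" "\<forall>k\<in>{1..N-2}. \<Phi> ` Xs k \<subseteq> sq_arc N s k"
    "openin X U" "Xs (N - 1) \<union> Xs N \<subseteq> U" "\<Phi> ` U \<subseteq> {(x, 1) | x. 0 \<le> x \<and> x \<le> 1}"
proof -
  have arcs: "\<forall>i\<in>{1..N-1}. \<exists>U. openin X U \<and>
      (if i = N - 1 then Xs (N - 1) \<union> Xs N else Xs i) \<subseteq> U \<and> \<Phi> ` U \<subseteq> sq_arc N s i"
    using assms(2) unfolding F'_class_def by blast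
  have "\<Phi> ` Xs k \<subseteq> sq_arc N s k" if "k \<in> {1..N-2}" for k
  proof -
    have "k \<in> {1..N-1}" "k \<noteq> N - 1" using that assms(1) by auto
    with arcs obtain Uk where "Xs k \<subseteq> Uk" "\<Phi> ` Uk \<subseteq> sq_arc N s k" by fastforce
    then show ?thesis by auto
  qed
  moreover have "N - 1 \<in> {1..N-1}" using assms(1) by simp
  from arcs[rule_format, OF this] obtain U
    where "openin X U" "Xs (N - 1) \<union> Xs N \<subseteq> U" "\<Phi> ` U \<subseteq> sq_arc N s (N - 1)"
    by auto
  ultimately show thesis
    using that assms(2) sq_arc_top[of N s] assms(1) unfolding F'_class_def by auto
qed

text \<open>Points of X_k on the top edge can only be the corners p_1 (for k = 1) and p_(N-1)
  (for k = N - 2), so a map agreeing with \<Phi> off U and at these corners keeps the arcs.\<close>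
lemma sq_arc_images_preserved:
  assumes "4 \<le> N" and arcs: "\<forall>k\<in>{1..N-2}. \<Phi> ` Xs k \<subseteq> sq_arc N s k"
    and top: "\<Phi> ` U \<subseteq> {(x, 1) | x. 0 \<le> x \<and> x \<le> 1}"
    and off_U: "\<forall>q. q \<notin> U \<longrightarrow> \<Psi> q = \<Phi> q"
    and "\<forall>q\<in>Xs 1. \<Phi> q = (0, 1) \<longrightarrow> \<Psi> q = \<Phi> q"
    and "\<forall>q\<in>Xs (N - 2). \<Phi> q = (1, 1) \<longrightarrow> \<Psi> q = \<Phi> q"
  shows "\<forall>k\<in>{1..N-2}. \<Psi> ` Xs k \<subseteq> sq_arc N s k"
proof -
  have "\<Psi> q = \<Phi> q" if k: "k \<in> {1..N-2}" and q: "q \<in> Xs k" for k q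
  proof (cases "q \<in> U")
    case True
    then have "snd (\<Phi> q) = 1" using top by auto
    moreover have "\<Phi> q \<in> sq_arc N s k" using arcs k q by blast
    ultimately have "(fst (\<Phi> q), 1) \<in> sq_arc N s k" by (metis prod.collapse)
    then have "(k = 1 \<and> fst (\<Phi> q) = 0) \<or> (k = N - 2 \<and> fst (\<Phi> q) = 1)"
      by (rule sq_arc_top_point[OF assms(1) k])
    then show ?thesis using assms(5,6) q \<open>snd (\<Phi> q) = 1\<close> by (auto simp: prod_eq_iff)
  qed (use off_U in blast)
  then show ?thesis using arcs by (simp cong: image_cong)
qed

theorem mainTheorem9:
  fixes X :: "'m topology" and A :: "('m, 'd::finite) chart set"
    and W :: "('m, 'd) chart \<Rightarrow> real^'d \<Rightarrow> real^'d^'d"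
    and N :: nat and Xs :: "nat \<Rightarrow> 'm set" and s :: "nat \<Rightarrow> real"
    and \<Phi> :: "'m \<Rightarrow> real \<times> real"
  assumes symp: "symplectic_manifold X A W"
    and N4: "N \<ge> 4"
    and cpt: "\<forall>i\<in>{1..N}. compactin X (Xs i)"
    and cyc: "intersect_cyclically N Xs"
    and s_first: "0 \<le> s 2"
    and s_incr: "\<forall>k\<in>{2..<N-2}. s k < s (k + 1)"
    and s_last: "s (N - 2) \<le> 1"
    and Phi: "\<Phi> \<in> F'_class X A unit_square (sq_arc N s) (N - 1)
                  (\<lambda>i. if i = N - 1 then Xs (N - 1) \<union> Xs N else Xs i)"
  shows "\<forall>\<epsilon>>0. \<exists>\<Phi>'. smooth_on_mfd A (\<lambda>x. fst (\<Phi>' x)) \<and> smooth_on_mfd A (\<lambda>x. snd (\<Phi>' x)) \<and>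
            \<Phi>' ` topspace X \<subseteq> unit_square \<and>
            (\<forall>k\<in>{1..N-2}. \<Phi>' ` Xs k \<subseteq> sq_arc N s k) \<and>
            (\<exists>\<delta>>0. \<Phi>' ` Xs (N - 1) \<subseteq> sq_arc N s (N - 1) - ball (0, 1) \<delta> \<and>
                    \<Phi>' ` Xs N \<subseteq> sq_arc N s (N - 1) - ball (1, 1) \<delta>) \<and>
            sup_norm X (poisson_bracket A W (\<lambda>x. fst (\<Phi>' x)) (\<lambda>x. snd (\<Phi>' x)))
              \<le> sup_norm X (poisson_bracket A W (\<lambda>x. fst (\<Phi> x)) (\<lambda>x. snd (\<Phi> x))) + ennreal \<epsilon>"
proof -
  have atlas: "smooth_atlas X A" and H: "Hausdorff_space X"
    using symp unfolding symplectic_manifold_def smooth_manifold_def by auto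
  obtain U where smooth: "smooth_on_mfd A (\<lambda>x. fst (\<Phi> x))" "smooth_on_mfd A (\<lambda>x. snd (\<Phi> x))"
    and square: "\<Phi> ` topspace X \<subseteq> unit_square" and arcs: "\<forall>k\<in>{1..N-2}. \<Phi> ` Xs k \<subseteq> sq_arc N s k"
    and U: "openin X U" "Xs (N - 1) \<union> Xs N \<subseteq> U" "\<Phi> ` U \<subseteq> {(x, 1) | x. 0 \<le> x \<and> x \<le> 1}"
    by (rule F'_class_sq_arcD[OF N4 Phi])
  have K: "compactin X (Xs (N - 1))" "compactin X (Xs N)"
    and L: "closedin X (Xs 1)" "closedin X (Xs (N - 2))"
    using cpt N4 compactin_imp_closedin[OF H] by auto
  have "Xs (N - 1) \<inter> Xs 1 = {}" "Xs N \<inter> Xs (N - 2) = {}"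
    using N4 intersect_cyclically_disjoint[OF cyc, of 1 "N - 1"]
      intersect_cyclically_disjoint[OF cyc, of "N - 2" N] by (simp_all add: Int_commute)
  then obtain \<Psi> \<delta> where \<Psi>:
    "smooth_on_mfd A (\<lambda>x. fst (\<Psi> x))" "smooth_on_mfd A (\<lambda>x. snd (\<Psi> x))"
    "\<Psi> ` topspace X \<subseteq> unit_square" "\<forall>q. q \<notin> U \<longrightarrow> \<Psi> q = \<Phi> q"
    "\<forall>q\<in>Xs 1. \<Phi> q = (0, 1) \<longrightarrow> \<Psi> q = \<Phi> q" "\<forall>q\<in>Xs (N - 2). \<Phi> q = (1, 1) \<longrightarrow> \<Psi> q = \<Phi> q"
    "0 < \<delta>" "\<Psi> ` Xs (N - 1) \<subseteq> {(x, 1) | x. 0 \<le> x \<and> x \<le> 1} - ball (0, 1) \<delta>"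
    "\<Psi> ` Xs N \<subseteq> {(x, 1) | x. 0 \<le> x \<and> x \<le> 1} - ball (1, 1) \<delta>"
    "\<forall>p\<in>topspace X. poisson_bracket A W (\<lambda>x. fst (\<Psi> x)) (\<lambda>x. snd (\<Psi> x)) p
       = poisson_bracket A W (\<lambda>x. fst (\<Phi> x)) (\<lambda>x. snd (\<Phi> x)) p"
    by (rule exists_square_map_off_corners[OF atlas H smooth square U(1,3) K U(2) L])
  have "\<forall>k\<in>{1..N-2}. \<Psi> ` Xs k \<subseteq> sq_arc N s k"
    by (rule sq_arc_images_preserved[OF N4 arcs U(3) \<Psi>(4-6)])
  moreover have "sup_norm X (poisson_bracket A W (\<lambda>x. fst (\<Psi> x)) (\<lambda>x. snd (\<Psi> x)))
      = sup_norm X (poisson_bracket A W (\<lambda>x. fst (\<Phi> x)) (\<lambda>x. snd (\<Phi> x)))"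
    unfolding sup_norm_def using \<Psi>(10) by (intro SUP_cong) auto
  ultimately show ?thesis
    using \<Psi>(1-3,7-9) N4 sq_arc_top[of N s]
    by (intro allI impI exI[of _ \<Psi>]) (auto intro: add_increasing2)
qed

end
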